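(* Let $n\ge1$, let $\mathcal{I}\in\{\mathcal{N},\mathcal{M}\}$ and let $\kappa$ be a cardinal. If $\mathrm{cov}(\mathcal{I})=\mathrm{cof}(\mathcal{I})=\kappa$, then there exists a linear subspace $H$ of $\mathbb{R}^n$, considered as a vector space over $\mathbb{Q}$, which is a $\kappa$-Luzin set for $\mathcal{I}$.
   Context: $\mathcal{N}$ is the $\sigma$-ideal of Lebesgue null subsets of $\mathbb{R}^n$, and $\mathcal{M}$ is the $\sigma$-ideal of meager subsets of $\mathbb{R}^n$. $\mathrm{cov}(\mathcal{I})=\min\{|\mathcal{F}|:\mathcal{F}\subseteq\mathcal{I},\ \bigcup\mathcal{F}=\mathbb{R}^n\}$. $\mathrm{cof}(\mathcal{I})=\min\{|\mathcal{F}|:\mathcal{F}\subseteq\mathcal{I},\ \forall A\in\mathcal{I}\ \exists B\in\mathcal{F}\ A\subseteq B\}$. A $\kappa$-Luzin set for $\mathcal{I}$ is a set $L\subseteq\mathbb{R}^n$ with $|L|\ge\kappa$ such that $|L\cap B|<\kappa$ for every $B\in\mathcal{I}$. *)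

theory Defs
  imports "HOL-Analysis.Analysis"
begin


text \<open>Lebesgue null subsets of R^n (lebesgue is the completed measure, so these are
  exactly the sets of outer measure zero).\<close>
definition null_ideal :: "('a::euclidean_space) set set" where
  "null_ideal = {A. A \<in> null_sets lebesgue}"

definition nowhere_dense :: "('a::topological_space) set \<Rightarrow> bool" where
  "nowhere_dense A \<longleftrightarrow> interior (closure A) = {}"

definition meager_ideal :: "('a::topological_space) set set" where
  "meager_ideal = {A. \<exists>F. countable F \<and> (\<forall>N\<in>F. nowhere_dense N) \<and> A \<subseteq> \<Union>F}"

text \<open>The cardinal kappa is represented as the cardinality of a set K.\<close>
definition cov_is :: "'a set set \<Rightarrow> 'k set \<Rightarrow> bool" where
  "cov_is I K \<longleftrightarrow>
     (\<exists>F. F \<subseteq> I \<and> \<Union>F = UNIV \<and> ordIso2 (card_of (F)) (card_of (K))) \<and>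
     (\<forall>F. F \<subseteq> I \<and> \<Union>F = UNIV \<longrightarrow> ordLeq3 (card_of (K)) (card_of (F)))"

definition cof_is :: "'a set set \<Rightarrow> 'k set \<Rightarrow> bool" where
  "cof_is I K \<longleftrightarrow>
     (\<exists>F. F \<subseteq> I \<and> (\<forall>A\<in>I. \<exists>B\<in>F. A \<subseteq> B) \<and> ordIso2 (card_of (F)) (card_of (K))) \<and>
     (\<forall>F. F \<subseteq> I \<and> (\<forall>A\<in>I. \<exists>B\<in>F. A \<subseteq> B) \<longrightarrow> ordLeq3 (card_of (K)) (card_of (F)))"

definition luzin_set :: "'a set set \<Rightarrow> 'k set \<Rightarrow> 'a set \<Rightarrow> bool" where
  "luzin_set I K L \<longleftrightarrow> ordLeq3 (card_of (K)) (card_of (L)) \<and> (\<forall>B\<in>I. ordLess2 (card_of (L \<inter> B)) (card_of (K)))"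

definition rat_subspace :: "('a::real_vector) set \<Rightarrow> bool" where
  "rat_subspace H \<longleftrightarrow> 0 \<in> H \<and> (\<forall>x\<in>H. \<forall>y\<in>H. x + y \<in> H) \<and>
     (\<forall>q\<in>\<rat>. \<forall>x\<in>H. q *\<^sub>R x \<in> H)"

end

theory Submission
  imports Defs
begin

(* Fix a cofinal family (B_k)_{k in K} in I, enumerated along the canonical well-order of K.
   By transfinite recursion choose points x_k such that x_k lies neither in the rational span
   of the earlier points x_j (j < k) nor in any affine preimage {y. h + q y in B_j} with j < k,
   h in that span and q a nonzero rational.  Each of these forbidden sets is a union of fewer
   than kappa members of I, so it is not the whole space because cov(I) = kappa.  The rational
   span H of all x_k is the required Luzin subspace: the x_k are distinct, so |H| >= kappa, and
   a vector of H inside B_beta is already a rational combination of the x_j with j <= beta, so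
   H meets each B_beta, hence each member of I, in fewer than kappa points. *)

unbundle cardinal_syntax

section \<open>The null and the meager ideal\<close>

lemma affine_preimage_eq_image:
  fixes N :: "'a::real_vector set"
  assumes "c \<noteq> 0"
  shows "{y. h + c *\<^sub>R y \<in> N} = (\<lambda>z. inverse c *\<^sub>R (z - h)) ` N"
  using assms by (force simp: image_iff)

lemma nowhere_dense_affine_preimage:
  fixes N :: "'a::real_normed_vector set"
  assumes "nowhere_dense N" "c \<noteq> 0"
  shows "nowhere_dense {y. h + c *\<^sub>R y \<in> N}"
proof -
  define f where "f = (\<lambda>z::'a. inverse c *\<^sub>R (z - h))"
  have "homeomorphic_map euclidean euclidean f"
    unfolding homeomorphic_map_maps homeomorphic_maps_def
    by (rule exI[of _ "\<lambda>y. h + c *\<^sub>R y"]) (use assms(2) in \<open>auto simp: f_def intro!: continuous_intros\<close>)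
  then show ?thesis
    using assms homeomorphic_map_closure_of[of euclidean euclidean f N]
      homeomorphic_map_interior_of[of euclidean euclidean f "closure N"]
    by (simp add: nowhere_dense_def affine_preimage_eq_image f_def)
qed

lemma negligible_affine_preimage:
  fixes N :: "'a::euclidean_space set"
  assumes "negligible N" "c \<noteq> 0"
  shows "negligible {y. h + c *\<^sub>R y \<in> N}"
  unfolding affine_preimage_eq_image[OF assms(2)]
  by (intro negligible_differentiable_image_negligible assms derivative_intros) auto

text \<open>The whole space is neither null (it contains a nonempty box) nor meager (Baire category
  theorem: the complements of the closures of countably many nowhere dense sets have dense
  intersection).\<close>

lemma UNIV_not_null: "(UNIV :: 'a::euclidean_space set) \<notin> null_ideal"
proof
  assume "UNIV \<in> (null_ideal :: 'a set set)"
  then have "negligible (box (0::'a) One)"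
    by (auto simp: null_ideal_def negligible_iff_null_sets intro: negligible_subset)
  moreover have "box (0::'a) One \<noteq> {}"
    by (simp add: box_eq_empty inner_Basis)
  ultimately show False
    using negligible_interval(2) by blast
qed

lemma UNIV_not_meager: "(UNIV :: 'a::euclidean_space set) \<notin> meager_ideal"
proof
  assume "UNIV \<in> (meager_ideal :: 'a set set)"
  then obtain F where F: "countable F" "\<And>N. N \<in> F \<Longrightarrow> nowhere_dense N"
    "\<Union>F = (UNIV :: 'a set)"
    by (auto simp: meager_ideal_def)
  define \<G> where "\<G> = (\<lambda>N. - closure N) ` F"
  have "(UNIV :: 'a set) \<subseteq> closure (\<Inter>\<G>)"
  proof (rule Baire)
    show "countable \<G>"
      using F(1) by (simp add: \<G>_def)
    fix T assume "T \<in> \<G>"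
    then obtain N where N: "N \<in> F" "T = - closure N"
      by (auto simp: \<G>_def)
    then have "closure T = UNIV"
      using F(2)[OF N(1)] by (simp add: closure_complement nowhere_dense_def)
    then show "openin (top_of_set UNIV) T \<and> UNIV \<subseteq> closure T"
      using N(2) by auto
  qed simp
  moreover have "\<Inter>\<G> = {}"
  proof -
    have "x \<notin> \<Inter>\<G>" for x
    proof -
      obtain N where "N \<in> F" "x \<in> N"
        using F(3) by blast
      then show ?thesis
        using closure_subset by (auto simp: \<G>_def)
    qed
    then show ?thesis
      by blast
  qed
  ultimately show False
    by simp
qed

lemma meager_countable_Union:
  assumes "countable G" "G \<subseteq> meager_ideal"
  shows "\<Union>G \<in> meager_ideal"
proof -
  have "\<forall>A\<in>G. \<exists>F. countable F \<and> (\<forall>N\<in>F. nowhere_dense N) \<and> A \<subseteq> \<Union>F"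
    using assms(2) by (auto simp: meager_ideal_def)
  then obtain F where F: "\<And>A. A \<in> G \<Longrightarrow> countable (F A) \<and> (\<forall>N\<in>F A. nowhere_dense N) \<and> A \<subseteq> \<Union>(F A)"
    by metis
  have "countable (\<Union>A\<in>G. F A)"
    using assms(1) F by blast
  moreover have "\<forall>N\<in>(\<Union>A\<in>G. F A). nowhere_dense N"
    using F by blast
  moreover have "\<Union>G \<subseteq> \<Union>(\<Union>A\<in>G. F A)"
  proof
    fix x assume "x \<in> \<Union>G"
    then obtain A where "A \<in> G" "x \<in> A"
      by blast
    then show "x \<in> \<Union>(\<Union>A\<in>G. F A)"
      using F[of A] by blast
  qed
  ultimately show ?thesis
    unfolding meager_ideal_def by (intro CollectI exI[of _ "\<Union>A\<in>G. F A"]) simp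
qed

lemma singleton_in_null_or_meager:
  fixes I :: "'a::euclidean_space set set"
  assumes "I = null_ideal \<or> I = meager_ideal"
  shows "{a} \<in> I"
  using assms
  by (auto simp: null_ideal_def meager_ideal_def nowhere_dense_def
      negligible_iff_null_sets[symmetric] intro!: exI[of _ "{{a}}"])

lemma affine_preimage_in_null_or_meager:
  fixes I :: "'a::euclidean_space set set"
  assumes "I = null_ideal \<or> I = meager_ideal" "B \<in> I" "c \<noteq> 0"
  shows "{y. h + c *\<^sub>R y \<in> B} \<in> I"
  using assms(1)
proof
  assume "I = null_ideal"
  then show ?thesis
    using assms(2,3) negligible_affine_preimage
    by (simp add: null_ideal_def negligible_iff_null_sets[symmetric])
next
  assume I: "I = meager_ideal"
  then obtain F where F: "countable F" "\<forall>N\<in>F. nowhere_dense N" "B \<subseteq> \<Union>F"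
    using assms(2) by (auto simp: meager_ideal_def)
  show ?thesis
    unfolding I meager_ideal_def
    by (rule CollectI, rule exI[of _ "(\<lambda>N. {y. h + c *\<^sub>R y \<in> N}) ` F"])
      (use F nowhere_dense_affine_preimage[OF _ assms(3)] in auto)
qed

lemma countable_Union_not_UNIV:
  fixes I :: "'a::euclidean_space set set"
  assumes "I = null_ideal \<or> I = meager_ideal" "G \<subseteq> I" "countable G"
  shows "\<Union>G \<noteq> UNIV"
  using assms(1)
proof
  assume "I = null_ideal"
  then have "\<Union>G \<in> null_ideal"
    using assms(2,3)
    by (auto simp: null_ideal_def negligible_iff_null_sets[symmetric] intro: negligible_countable_Union)
  then show ?thesis
    using UNIV_not_null by metis
next
  assume "I = meager_ideal"
  then show ?thesis
    using assms(2,3) meager_countable_Union UNIV_not_meager by metis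
qed

section \<open>Cardinal bookkeeping\<close>

lemma rat_ordLess_infinite:
  assumes "|UNIV :: rat set| <o |K|"
  shows "\<not> finite K"
  using assms card_of_ordLeq_infinite infinite_UNIV_char_0 ordLess_imp_ordLeq by blast

lemma card_of_Times_ordLess_infinite:
  assumes C: "\<not> finite C" and A: "|A| <o |C|" and B: "|B| <o |C|"
  shows "|A \<times> B| <o |C|"
proof (cases "finite (A <+> B)")
  case True
  then have "finite (A \<times> B)"
    by simp
  then show ?thesis
    using finite_ordLess_infinite[OF card_of_Well_order card_of_Well_order] C
    by (simp add: Field_card_of)
next
  case False
  then have "|A \<times> B| \<le>o |A <+> B|"
    using card_of_Times_ordLeq_infinite_Field[of "|A <+> B|" A B]
      card_of_Plus1 card_of_Plus2 card_of_Card_order Field_card_of by metis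
  moreover have "|A <+> B| <o |C|"
    using card_of_Plus_ordLess_infinite[OF C A B] .
  ultimately show ?thesis
    using ordLeq_ordLess_trans by blast
qed

lemma card_of_under_ordLess:
  assumes "\<not> finite K" "a \<in> K"
  shows "|under |K| a| <o |K|"
proof -
  have "(a, a) \<in> |K|"
    using wo_rel.TOTALS[of "|K|"] card_of_Well_order[of K] assms(2)
    by (auto simp: wo_rel_def Field_card_of)
  then have under: "under |K| a = {a} \<union> underS |K| a"
    by (auto simp: under_def underS_def)
  have "|{a}| <o |K|"
    using finite_ordLess_infinite[OF card_of_Well_order card_of_Well_order, of "{a}" K] assms(1)
    by (simp add: Field_card_of)
  moreover have "|underS |K| a| <o |K|"
    using card_of_underS[OF card_of_Card_order[of K], of a] assms(2) by (simp add: Field_card_of)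
  ultimately show ?thesis
    unfolding under by (rule card_of_Un_ordLess_infinite[OF assms(1)])
qed

lemma cov_is_no_small_cover:
  assumes "cov_is I K" "G \<subseteq> I" "|G| <o |K|"
  shows "\<Union>G \<noteq> UNIV"
proof
  assume "\<Union>G = UNIV"
  moreover have "\<forall>F. F \<subseteq> I \<and> \<Union>F = UNIV \<longrightarrow> |K| \<le>o |F|"
    using assms(1) unfolding cov_is_def by (rule conjunct2)
  ultimately have "|K| \<le>o |G|"
    using assms(2) by blast
  with not_ordLess_ordLeq[OF assms(3)] show False
    by contradiction
qed

lemma cov_is_uncountable:
  assumes cov: "cov_is I K" and no_countable_cover: "\<And>G. G \<subseteq> I \<Longrightarrow> countable G \<Longrightarrow> \<Union>G \<noteq> UNIV"
  shows "|UNIV :: rat set| <o |K|"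
proof (rule ccontr)
  assume "\<not> |UNIV :: rat set| <o |K|"
  then have K_le: "|K| \<le>o |UNIV :: rat set|"
    by (simp add: not_ordLess_iff_ordLeq[OF card_of_Well_order card_of_Well_order])
  have "\<exists>G. G \<subseteq> I \<and> \<Union>G = UNIV \<and> |G| =o |K|"
    using cov unfolding cov_is_def by (rule conjunct1)
  then obtain G where G: "G \<subseteq> I" "\<Union>G = UNIV" "|G| =o |K|"
    by iprover
  have "|G| \<le>o |UNIV :: rat set|"
    by (rule ordIso_ordLeq_trans[OF G(3) K_le])
  then obtain f :: "_ \<Rightarrow> rat" where "inj_on f G"
    using card_of_ordLeq[of G "UNIV :: rat set"] by auto
  moreover have "countable (f ` G)"
    by (rule countable_subset[OF subset_UNIV countableI_type])
  ultimately have "countable G"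
    by (rule countable_image_inj_on[rotated])
  then show False
    using no_countable_cover[OF G(1)] G(2) by blast
qed

section \<open>Rational linear spans\<close>

text \<open>A real vector space is a vector space over \<open>\<rat>\<close> by restriction of scalars; we use the
  library's theory of modules for the resulting notion of span.\<close>

interpretation rat_vs: module "\<lambda>q::rat. \<lambda>x::'a::real_vector. of_rat q *\<^sub>R x"
  by unfold_locales (auto simp: scaleR_add_right scaleR_add_left of_rat_add of_rat_mult)

lemma rat_subspace_iff_subspace: "rat_subspace H \<longleftrightarrow> rat_vs.subspace H"
  by (auto simp: rat_subspace_def rat_vs.subspace_def Rats_def)

lemma rat_span_step: "s \<in> rat_vs.span S \<Longrightarrow> y \<in> rat_vs.span S \<Longrightarrow> of_rat q *\<^sub>R s + y \<in> rat_vs.span S"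
  using rat_vs.span_add rat_vs.span_scale by blast

lemma rat_span_finite_support:
  assumes "y \<in> rat_vs.span S"
  shows "\<exists>F. finite F \<and> F \<subseteq> S \<and> y \<in> rat_vs.span F"
  using assms
proof (induction rule: rat_vs.span_induct_alt)
  case base
  show ?case
    by (intro exI[of _ "{}"]) (simp add: rat_vs.span_zero)
next
  case (step c s y)
  then obtain F where "finite F" "F \<subseteq> S" "y \<in> rat_vs.span F"
    by blast
  moreover have "of_rat c *\<^sub>R s + y \<in> rat_vs.span (insert s F)"
    using rat_vs.span_mono[of F "insert s F"] \<open>y \<in> rat_vs.span F\<close>
    by (intro rat_span_step) (auto intro: rat_vs.span_base)
  ultimately show ?case
    using step(1) by (intro exI[of _ "insert s F"]) auto
qed

text \<open>The span is exhausted by the stages obtained by adding one more term \<open>q s\<close> at a time;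
  this presentation makes the cardinality estimate below a simple induction.\<close>

primrec rat_span_stage :: "'a::real_vector set \<Rightarrow> nat \<Rightarrow> 'a set" where
  "rat_span_stage S 0 = {0}"
| "rat_span_stage S (Suc n) = rat_span_stage S n \<union>
     (\<lambda>(q, s, y). of_rat q *\<^sub>R s + y) ` (UNIV \<times> S \<times> rat_span_stage S n)"

lemma rat_span_eq_stages: "rat_vs.span S = (\<Union>n. rat_span_stage S n)"
proof
  show "rat_vs.span S \<subseteq> (\<Union>n. rat_span_stage S n)"
  proof
    fix y assume "y \<in> rat_vs.span S"
    then show "y \<in> (\<Union>n. rat_span_stage S n)"
    proof (induction rule: rat_vs.span_induct_alt)
      case base
      show ?case
        using rat_span_stage.simps(1) by blast
    next
      case (step c s y)
      then obtain n where "y \<in> rat_span_stage S n"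
        by blast
      then have "of_rat c *\<^sub>R s + y \<in> rat_span_stage S (Suc n)"
        using step(1) by force
      then show ?case
        by blast
    qed
  qed
  show "(\<Union>n. rat_span_stage S n) \<subseteq> rat_vs.span S"
  proof -
    have "rat_span_stage S n \<subseteq> rat_vs.span S" for n
      by (induction n) (auto simp: rat_vs.span_zero intro!: rat_span_step intro: rat_vs.span_base)
    then show ?thesis
      by blast
  qed
qed

lemma rat_span_card_le:
  fixes S :: "'a::real_vector set" and T :: "'t set"
  assumes inf: "\<not> finite T" and S: "|S| \<le>o |T|" and Q: "|UNIV :: rat set| \<le>o |T|"
  shows "|rat_vs.span S| \<le>o |T|"
proof -
  have T: "Card_order (card_of T)" "\<not> finite (Field (card_of T))"
    using inf card_of_Card_order[of T] Field_card_of[of T] by auto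
  have "|rat_span_stage S n| \<le>o |T|" for n
  proof (induction n)
    case 0
    show ?case
      using inf card_of_singl_ordLeq[of T 0] by auto
  next
    case (Suc n)
    let ?new = "(\<lambda>(q, s, y). of_rat q *\<^sub>R s + y) ` (UNIV \<times> S \<times> rat_span_stage S n)"
    have "|S \<times> rat_span_stage S n| \<le>o |T|"
      using card_of_Times_ordLeq_infinite_Field[OF T(2) S Suc T(1)] .
    then have "|(UNIV :: rat set) \<times> S \<times> rat_span_stage S n| \<le>o |T|"
      using card_of_Times_ordLeq_infinite_Field[OF T(2) Q _ T(1)] by blast
    then have "|?new| \<le>o |T|"
      using card_of_image ordLeq_transitive by blast
    then show ?case
      using Suc T card_of_Un_ordLeq_infinite_Field by (metis rat_span_stage.simps(2))
  qed
  moreover have "|UNIV :: nat set| \<le>o |T|"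
    using inf infinite_iff_card_of_nat by blast
  ultimately show ?thesis
    unfolding rat_span_eq_stages by (intro card_of_UNION_ordLeq_infinite[OF inf]) auto
qed

lemma rat_span_card_less:
  fixes S :: "'a::real_vector set" and K :: "'k set"
  assumes Q: "|UNIV :: rat set| <o |K|" and S: "|S| <o |K|"
  shows "|rat_vs.span S| <o |K|"
proof -
  have "|(UNIV :: rat set) <+> S| <o |K|"
    using card_of_Plus_ordLess_infinite[OF rat_ordLess_infinite[OF Q] Q S] .
  moreover have "|rat_vs.span S| \<le>o |(UNIV :: rat set) <+> S|"
    by (rule rat_span_card_le) (auto simp: infinite_UNIV_char_0 card_of_Plus1 card_of_Plus2)
  ultimately show ?thesis
    using ordLeq_ordLess_trans by blast
qed

section \<open>Transfinite construction of an avoiding sequence\<close>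

lemma wo_rel_avoiding_choice:
  fixes Bad :: "('k \<Rightarrow> 'a) \<Rightarrow> 'k \<Rightarrow> 'a set"
  assumes wo: "wo_rel r"
    and local: "\<And>f g k. \<forall>j\<in>underS r k. f j = g j \<Longrightarrow> Bad f k = Bad g k"
    and proper: "\<And>f k. k \<in> Field r \<Longrightarrow> Bad f k \<noteq> UNIV"
  shows "\<exists>x. \<forall>k\<in>Field r. x k \<notin> Bad x k"
proof -
  define H where "H f k = (SOME y. y \<notin> Bad f k)" for f k
  have "wo_rel.adm_wo r H"
    unfolding wo_rel.adm_wo_def[OF wo] H_def by (metis local)
  define x where "x = wo_rel.worec r H"
  have x_eq: "x = H x"
    unfolding x_def by (rule wo_rel.worec_fixpoint[OF wo \<open>wo_rel.adm_wo r H\<close>])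
  have "x k \<notin> Bad x k" if k: "k \<in> Field r" for k
  proof -
    obtain y where "y \<notin> Bad x k"
      using proper[OF k] by auto
    then have "H x k \<notin> Bad x k"
      unfolding H_def by (rule someI)
    then show ?thesis
      using fun_cong[OF x_eq, of k] by simp
  qed
  then show ?thesis
    by blast
qed

definition forbidden :: "'k rel \<Rightarrow> ('k \<Rightarrow> 'a::real_vector set) \<Rightarrow> ('k \<Rightarrow> 'a) \<Rightarrow> 'k \<Rightarrow> 'a set" where
  "forbidden r B x k = rat_vs.span (x ` underS r k) \<union>
     {y. \<exists>j\<in>underS r k. \<exists>h\<in>rat_vs.span (x ` underS r k). \<exists>q::rat. q \<noteq> 0 \<and> h + of_rat q *\<^sub>R y \<in> B j}"

definition avoiding :: "'k rel \<Rightarrow> ('k \<Rightarrow> 'a::real_vector set) \<Rightarrow> ('k \<Rightarrow> 'a) \<Rightarrow> bool" where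
  "avoiding r B x \<longleftrightarrow> (\<forall>k\<in>Field r. x k \<notin> forbidden r B x k)"

lemma forbidden_cong:
  assumes "\<forall>j\<in>underS r k. x j = x' j"
  shows "forbidden r B x k = forbidden r B x' k"
proof -
  have "x ` underS r k = x' ` underS r k"
    using assms by (simp cong: image_cong)
  then show ?thesis
    by (simp add: forbidden_def)
qed

lemma wo_rel_finite_has_max:
  assumes wo: "wo_rel r" and "finite A" "A \<noteq> {}" "A \<subseteq> Field r"
  shows "\<exists>m\<in>A. \<forall>a\<in>A. (a, m) \<in> r"
  using assms(2-4)
proof (induction rule: finite_ne_induct)
  case (singleton a)
  then show ?case
    using wo_rel.TOTALS[OF wo] by auto
next
  case (insert a A)
  then obtain m where m: "m \<in> A" "\<forall>b\<in>A. (b, m) \<in> r"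
    by auto
  have a: "a \<in> Field r" and "m \<in> Field r"
    using insert.prems m(1) by auto
  then consider "(a, m) \<in> r" | "(m, a) \<in> r"
    using wo_rel.TOTALS[OF wo] by blast
  then show ?case
  proof cases
    case 1
    then show ?thesis
      using m by auto
  next
    case 2
    then have "\<forall>b\<in>A. (b, a) \<in> r"
      using m(2) wo_rel.TRANS[OF wo] by (auto dest: transD)
    moreover have "(a, a) \<in> r"
      using wo_rel.TOTALS[OF wo] a by blast
    ultimately show ?thesis
      by auto
  qed
qed

text \<open>An avoiding sequence is injective, since \<open>x\<^sub>k\<close> avoids the earlier points themselves.\<close>

lemma avoiding_inj_on:
  assumes wo: "wo_rel r" and avoid: "avoiding r B x"
  shows "inj_on x (Field r)"
proof (rule inj_onI)
  have earlier: "x a \<noteq> x b" if "a \<in> underS r b" "b \<in> Field r" for a b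
  proof -
    have "x a \<in> forbidden r B x b"
      using that(1) by (auto simp: forbidden_def intro: rat_vs.span_base)
    then show ?thesis
      using avoid that(2) unfolding avoiding_def by metis
  qed
  fix a b assume ab: "a \<in> Field r" "b \<in> Field r" "x a = x b"
  show "a = b"
  proof (rule ccontr)
    assume "a \<noteq> b"
    then have "a \<in> underS r b \<or> b \<in> underS r a"
      using wo_rel.TOTALS[OF wo] ab(1,2) by (auto simp: underS_def)
    then show False
      using earlier ab by metis
  qed
qed

text \<open>If a later point \<open>x\<^sub>\<alpha>\<close> occurred with a nonzero
  coefficient, writing \<open>y = h + q x\<^sub>\<alpha>\<close> with \<open>h\<close> spanned by earlier points would put \<open>x\<^sub>\<alpha>\<close> into
  a set it was chosen to avoid.\<close>

lemma avoiding_finite_span_under: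
  assumes wo: "wo_rel r" and avoid: "avoiding r B x" and \<beta>: "\<beta> \<in> Field r" and y: "y \<in> B \<beta>"
    and fin: "finite A" and A: "A \<subseteq> Field r"
  shows "y \<in> rat_vs.span (x ` A) \<Longrightarrow> y \<in> rat_vs.span (x ` under r \<beta>)"
  using fin
proof (induction rule: finite_remove_induct)
  case empty
  then show ?case
    using rat_vs.span_mono[of "{}" "x ` under r \<beta>"] by auto
next
  case (remove C)
  show ?case
  proof (cases "C \<subseteq> under r \<beta>")
    case True
    then show ?thesis
      using remove.prems rat_vs.span_mono[of "x ` C" "x ` under r \<beta>"] by blast
  next
    case False
    have C: "C \<subseteq> Field r"
      using remove.hyps(3) A by blast
    obtain \<alpha> where \<alpha>: "\<alpha> \<in> C" "\<forall>c\<in>C. (c, \<alpha>) \<in> r"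
      using wo_rel_finite_has_max[OF wo remove.hyps(1,2) C] by blast
    have "(\<alpha>, \<beta>) \<notin> r"
      using False \<alpha> wo_rel.TRANS[OF wo] by (auto simp: under_def dest: transD)
    then have \<beta>_before: "\<beta> \<in> underS r \<alpha>"
      using wo_rel.TOTALS[OF wo] \<beta> C \<alpha>(1) by (auto simp: underS_def)
    have rest_before: "C - {\<alpha>} \<subseteq> underS r \<alpha>"
      using \<alpha> by (auto simp: underS_def)
    have "x ` C = insert (x \<alpha>) (x ` (C - {\<alpha>}))"
      using \<alpha>(1) by blast
    then have "y \<in> rat_vs.span (insert (x \<alpha>) (x ` (C - {\<alpha>})))"
      using remove.prems by simp
    then obtain q where q: "y - of_rat q *\<^sub>R x \<alpha> \<in> rat_vs.span (x ` (C - {\<alpha>}))"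
      unfolding rat_vs.span_breakdown_eq by blast
    show ?thesis
    proof (cases "q = 0")
      case True
      then show ?thesis
        using remove.IH[OF \<alpha>(1)] q by simp
    next
      case False
      have "y - of_rat q *\<^sub>R x \<alpha> \<in> rat_vs.span (x ` underS r \<alpha>)"
        using q rest_before rat_vs.span_mono[of "x ` (C - {\<alpha>})" "x ` underS r \<alpha>"] by blast
      moreover have "(y - of_rat q *\<^sub>R x \<alpha>) + of_rat q *\<^sub>R x \<alpha> \<in> B \<beta>"
        using y by simp
      ultimately have "x \<alpha> \<in> forbidden r B x \<alpha>"
        using \<beta>_before False unfolding forbidden_def by blast
      then show ?thesis
        using avoid C \<alpha>(1) unfolding avoiding_def by blast
    qed
  qed
qed

lemma avoiding_span_inter_under:
  assumes wo: "wo_rel r" and avoid: "avoiding r B x" and \<beta>: "\<beta> \<in> Field r"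
  shows "rat_vs.span (x ` Field r) \<inter> B \<beta> \<subseteq> rat_vs.span (x ` under r \<beta>)"
proof
  fix y assume y: "y \<in> rat_vs.span (x ` Field r) \<inter> B \<beta>"
  then obtain F where "finite F" "F \<subseteq> x ` Field r" "y \<in> rat_vs.span F"
    using rat_span_finite_support by blast
  then obtain A where A: "A \<subseteq> Field r" "finite A" "F = x ` A"
    by (meson finite_subset_image)
  show "y \<in> rat_vs.span (x ` under r \<beta>)"
    using avoiding_finite_span_under[OF wo avoid \<beta> _ A(2,1)] y \<open>y \<in> rat_vs.span F\<close> A(3) by simp
qed

section \<open>Luzin subspaces\<close>

text \<open>Under the hypotheses of the main construction, every forbidden set is the union of fewer
  than \<open>\<kappa>\<close> members of the ideal: singletons of a small span and affine preimages of the
  cofinal sets indexed by a small parameter set.\<close>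

lemma forbidden_small_cover:
  fixes I :: "'a::real_vector set set" and K :: "'k set" and B :: "'k \<Rightarrow> 'a set"
  assumes singleton: "\<And>a. {a} \<in> I"
    and affine: "\<And>A h q. A \<in> I \<Longrightarrow> q \<noteq> 0 \<Longrightarrow> {y. h + of_rat q *\<^sub>R y \<in> A} \<in> I"
    and B: "\<And>k. k \<in> K \<Longrightarrow> B k \<in> I"
    and rat_less: "|UNIV :: rat set| <o |K|" and k: "k \<in> K"
  shows "\<exists>G. G \<subseteq> I \<and> |G| <o |K| \<and> forbidden |K| B x k = \<Union>G"
proof -
  let ?U = "underS |K| k"
  let ?R = "rat_vs.span (x ` ?U)"
  let ?Q = "{q::rat. q \<noteq> 0}"
  let ?preimage = "\<lambda>(j, h, q). {y. h + of_rat q *\<^sub>R y \<in> B j}"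
  define G where "G = (\<lambda>s. {s}) ` ?R \<union> ?preimage ` (?U \<times> ?R \<times> ?Q)"
  have K: "\<not> finite K"
    using rat_ordLess_infinite[OF rat_less] .
  have U: "|?U| <o |K|"
    using card_of_underS[OF card_of_Card_order[of K], of k] k by (simp add: Field_card_of)
  have R: "|?R| <o |K|"
    using rat_span_card_less[OF rat_less] U card_of_image ordLeq_ordLess_trans by blast
  have Q: "|?Q| <o |K|"
    using card_of_mono1[of ?Q UNIV] rat_less ordLeq_ordLess_trans by blast
  have "|?R \<times> ?Q| <o |K|"
    by (rule card_of_Times_ordLess_infinite[OF K R Q])
  then have "|?U \<times> ?R \<times> ?Q| <o |K|"
    by (rule card_of_Times_ordLess_infinite[OF K U])
  then have "|?preimage ` (?U \<times> ?R \<times> ?Q)| <o |K|"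
    by (rule ordLeq_ordLess_trans[OF card_of_image])
  moreover have "|(\<lambda>s. {s}) ` ?R| <o |K|"
    by (rule ordLeq_ordLess_trans[OF card_of_image R])
  ultimately have "|G| <o |K|"
    unfolding G_def by (intro card_of_Un_ordLess_infinite[OF K])
  moreover have "G \<subseteq> I"
  proof -
    have "B j \<in> I" if "j \<in> ?U" for j
      using B that underS_Field[of j "|K|" k] by (simp add: Field_card_of)
    then show ?thesis
      unfolding G_def using singleton affine by auto
  qed
  moreover have "forbidden |K| B x k = \<Union>G"
  proof -
    have "\<Union>((\<lambda>s. {s}) ` ?R) = ?R"
      by blast
    moreover have "\<Union>(?preimage ` (?U \<times> ?R \<times> ?Q)) =
      {y. \<exists>j\<in>?U. \<exists>h\<in>?R. \<exists>q::rat. q \<noteq> 0 \<and> h + of_rat q *\<^sub>R y \<in> B j}"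
      by fastforce
    ultimately show ?thesis
      unfolding forbidden_def G_def by (simp only: Union_Un_distrib)
  qed
  ultimately show ?thesis
    by blast
qed

lemma avoiding_sequence_exists:
  fixes I :: "'a::real_vector set set" and K :: "'k set" and B :: "'k \<Rightarrow> 'a set"
  assumes singleton: "\<And>a. {a} \<in> I"
    and affine: "\<And>A h q. A \<in> I \<Longrightarrow> q \<noteq> 0 \<Longrightarrow> {y. h + of_rat q *\<^sub>R y \<in> A} \<in> I"
    and no_small_cover: "\<And>G. G \<subseteq> I \<Longrightarrow> |G| <o |K| \<Longrightarrow> \<Union>G \<noteq> UNIV"
    and rat_less: "|UNIV :: rat set| <o |K|"
    and B: "\<And>k. k \<in> K \<Longrightarrow> B k \<in> I"
  shows "\<exists>x. avoiding |K| B x"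
proof -
  have wo: "wo_rel |K|"
    unfolding wo_rel_def by (rule card_of_Well_order)
  have proper: "forbidden |K| B f k \<noteq> UNIV" if k: "k \<in> Field |K|" for f k
  proof -
    have "k \<in> K"
      using k by (simp add: Field_card_of)
    then obtain G where G: "G \<subseteq> I" "|G| <o |K|" "forbidden |K| B f k = \<Union>G"
      using forbidden_small_cover[OF singleton affine B rat_less] by iprover
    then show ?thesis
      using no_small_cover[OF G(1,2)] by simp
  qed
  show ?thesis
    unfolding avoiding_def by (rule wo_rel_avoiding_choice[OF wo forbidden_cong proper])
qed

theorem rat_subspace_luzin_set_exists:
  fixes I :: "'a::real_vector set set" and K :: "'k set" and B :: "'k \<Rightarrow> 'a set"
  assumes singleton: "\<And>a. {a} \<in> I"
    and affine: "\<And>A h q. A \<in> I \<Longrightarrow> q \<noteq> 0 \<Longrightarrow> {y. h + of_rat q *\<^sub>R y \<in> A} \<in> I"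
    and no_small_cover: "\<And>G. G \<subseteq> I \<Longrightarrow> |G| <o |K| \<Longrightarrow> \<Union>G \<noteq> UNIV"
    and rat_less: "|UNIV :: rat set| <o |K|"
    and B: "\<And>k. k \<in> K \<Longrightarrow> B k \<in> I"
    and cofinal: "\<And>A. A \<in> I \<Longrightarrow> \<exists>k\<in>K. A \<subseteq> B k"
  shows "\<exists>H. rat_subspace H \<and> luzin_set I K H"
proof -
  have wo: "wo_rel |K|"
    unfolding wo_rel_def by (rule card_of_Well_order)
  obtain x where avoid: "avoiding |K| B x"
    using avoiding_sequence_exists[of I K B, OF singleton affine no_small_cover rat_less B] by blast
  have K: "\<not> finite K"
    using rat_ordLess_infinite[OF rat_less] .
  define H where "H = rat_vs.span (x ` K)"
  have "rat_subspace H"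
    unfolding H_def rat_subspace_iff_subspace by (rule rat_vs.subspace_span)
  moreover have "|K| \<le>o |H|"
  proof -
    have "inj_on x K"
      using avoiding_inj_on[OF wo avoid] by (simp add: Field_card_of)
    moreover have "x ` K \<subseteq> H"
      unfolding H_def by (rule rat_vs.span_superset)
    ultimately show ?thesis
      using card_of_ordLeq by blast
  qed
  moreover have "|H \<inter> A| <o |K|" if A: "A \<in> I" for A
  proof -
    obtain \<beta> where \<beta>: "\<beta> \<in> K" "A \<subseteq> B \<beta>"
      using cofinal[OF A] by blast
    have "H \<inter> B \<beta> \<subseteq> rat_vs.span (x ` under |K| \<beta>)"
      using avoiding_span_inter_under[OF wo avoid, of \<beta>] \<beta>(1) by (simp add: H_def Field_card_of)
    then have "H \<inter> A \<subseteq> rat_vs.span (x ` under |K| \<beta>)"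
      using \<beta>(2) by blast
    moreover have "|rat_vs.span (x ` under |K| \<beta>)| <o |K|"
      using rat_span_card_less[OF rat_less] card_of_under_ordLess[OF K \<beta>(1)]
        card_of_image ordLeq_ordLess_trans by blast
    ultimately show ?thesis
      using card_of_mono1 ordLeq_ordLess_trans by blast
  qed
  ultimately show ?thesis
    unfolding luzin_set_def by (intro exI[of _ H]) simp
qed

theorem theorem2p5:
  fixes I :: "(real ^ 'n) set set" and K :: "'k set"
  assumes "I = null_ideal \<or> I = meager_ideal"
    and "cov_is I K" and "cof_is I K"
  shows "\<exists>H. rat_subspace H \<and> luzin_set I K H"
proof -
  have "\<exists>F. F \<subseteq> I \<and> (\<forall>A\<in>I. \<exists>C\<in>F. A \<subseteq> C) \<and> |F| =o |K|"
    using assms(3) unfolding cof_is_def by (rule conjunct1)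
  then obtain F where F: "F \<subseteq> I" "\<forall>A\<in>I. \<exists>C\<in>F. A \<subseteq> C" "|F| =o |K|"
    by iprover
  then obtain B where B: "bij_betw B K F"
    using card_of_ordIso ordIso_symmetric by blast
  show ?thesis
  proof (rule rat_subspace_luzin_set_exists)
    show "{a} \<in> I" for a
      using singleton_in_null_or_meager[OF assms(1)] .
    show "{y. h + of_rat q *\<^sub>R y \<in> A} \<in> I" if "A \<in> I" "q \<noteq> 0" for A h and q :: rat
      using affine_preimage_in_null_or_meager[OF assms(1)] that by simp
    show "\<Union>G \<noteq> UNIV" if "G \<subseteq> I" "|G| <o |K|" for G
      using cov_is_no_small_cover[OF assms(2) that] .
    show "|UNIV :: rat set| <o |K|"
      using cov_is_uncountable[OF assms(2) countable_Union_not_UNIV[OF assms(1)]] .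
    show "B k \<in> I" if "k \<in> K" for k
      using B F(1) that bij_betwE by blast
    show "\<exists>k\<in>K. A \<subseteq> B k" if "A \<in> I" for A
      using F(2) B that unfolding bij_betw_def by blast
  qed
qed

end
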